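(* Fix a round with load $v>0$ for agent $i$. Suppose the allocation is the MMF output for entitlements $e$, where agent $i$'s reported demand is $d_i=\hat\rho\,v$ for some $\hat\rho\ge0$ and the other agents' reported demands are arbitrary, and let $a_i$ be agent $i$'s allocation. Let $\bar\rho\ge\max(\rho_i,\hat\rho)$. Then $u_i(e_i/v)-u_i(a_i/v)\le L_i(\bar\rho-\hat\rho)$.
   Context: A divisible resource of size $1$ is shared by $n$ agents with entitlements $e_i>0$, $\sum_ie_i=1$. MMF$(e,d)$ on reported demands $d_1,\dots,d_n\ge0$: set $r=1$, $E=1$, $S=\{1,\dots,n\}$, $a=0$; process agents $j$ in ascending order of $d_j/e_j$; if $d_j<re_j/E$, set $a_j=d_j$, remove $j$ from $S$, $r\leftarrow r-d_j$, $E\leftarrow E-e_j$ and continue; otherwise set $a_k=re_k/E$ for all $k\in S$ and stop; output $a$. Agent $i$ has unit demand (demand per unit load) $\rho_i\ge0$ and a utility $u_i$ of allocation per unit load that is strictly increasing on $[0,\rho_i]$, constant on $[\rho_i,\infty)$, and $L_i$-Lipschitz. *)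

theory Defs
  imports "HOL-Analysis.Analysis"
begin

text \<open>Agents are processed along the list \<open>js\<close>
  (an ordering of all agents by ascending d_j/e_j); \<open>r\<close> is the remaining
  resource and \<open>E\<close> the remaining entitlement.\<close>
fun mmf_aux :: "(nat \<Rightarrow> real) \<Rightarrow> (nat \<Rightarrow> real) \<Rightarrow> nat list \<Rightarrow> real \<Rightarrow> real \<Rightarrow> (nat \<Rightarrow> real)" where
  "mmf_aux e d [] r E = (\<lambda>k. 0)"
| "mmf_aux e d (j # js) r E =
     (if d j < r * e j / E
      then (mmf_aux e d js (r - d j) (E - e j))(j := d j)
      else (\<lambda>k. if k \<in> set (j # js) then r * e k / E else 0))"

definition mmf_order :: "nat \<Rightarrow> (nat \<Rightarrow> real) \<Rightarrow> (nat \<Rightarrow> real) \<Rightarrow> nat list \<Rightarrow> bool" where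
  "mmf_order n e d ord \<longleftrightarrow> distinct ord \<and> set ord = {..<n} \<and>
     sorted_wrt (\<lambda>j k. d j / e j \<le> d k / e k) ord"

definition MMF :: "(nat \<Rightarrow> real) \<Rightarrow> (nat \<Rightarrow> real) \<Rightarrow> nat list \<Rightarrow> (nat \<Rightarrow> real)" where
  "MMF e d ord = mmf_aux e d ord 1 1"

end

theory Submission
  imports Defs
begin

text \<open>MMF gives every agent at least \<open>min d\<^sub>i e\<^sub>i\<close>. If that is at least \<open>e\<^sub>i\<close>,
  agent \<open>i\<close> is no worse off than with its entitlement; otherwise it receives its full report
  \<open>\<rho>hat v\<close>, so its utility is at least \<open>u \<rho>hat\<close>, while any utility is at most
  \<open>u \<rho>bar\<close>, and Lipschitz continuity bounds the difference.\<close>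

lemma mmf_aux_ge_min_demand_entitlement:
  assumes "distinct js" "\<forall>k\<in>set js. e k > 0" "E = (\<Sum>k\<in>set js. e k)" "E \<le> r" "i \<in> set js"
  shows "min (d i) (e i) \<le> mmf_aux e d js r E i"
  using assms
proof (induction js arbitrary: r E)
  case Nil
  then show ?case by simp
next
  case (Cons j js)
  have E_rest: "(\<Sum>k\<in>set js. e k) = E - e j"
    using Cons.prems by simp
  have "0 \<le> E - e j"
    unfolding E_rest[symmetric] using Cons.prems by (intro sum_nonneg) auto
  moreover have "0 < e j"
    using Cons.prems by simp
  ultimately have E_pos: "0 < E" by linarith
  have ratio_ge_1: "1 \<le> r / E"
    using Cons.prems E_pos by simp
  show ?case
  proof (cases "d j < r * e j / E")
    case served: True
    show ?thesis
    proof (cases "i = j")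
      case False
      \<comment> \<open>An agent served below its fair share \<open>r e\<^sub>j / E\<close> keeps the invariant \<open>E \<le> r\<close>.\<close>
      have "E - e j \<le> (r / E) * (E - e j)"
        using mult_right_mono[OF ratio_ge_1 \<open>0 \<le> E - e j\<close>] by simp
      also have "\<dots> = r - r * e j / E"
        using E_pos by (simp add: field_simps)
      also have "\<dots> < r - d j"
        using served by simp
      finally have "min (d i) (e i) \<le> mmf_aux e d js (r - d j) (E - e j) i"
        using Cons.IH[of "E - e j" "r - d j"] Cons.prems E_rest False by simp
      then show ?thesis
        using served False by simp
    qed (use served in simp)
  next
    case False
    have "0 \<le> e i"
      using Cons.prems(2,5) by (blast intro: less_imp_le)
    then have "e i \<le> (r / E) * e i"
      using mult_right_mono[OF ratio_ge_1] by simp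
    then show ?thesis
      using False Cons.prems by simp
  qed
qed

lemma MMF_ge_min_demand_entitlement:
  assumes "distinct ord" "set ord = A" "\<forall>k\<in>A. e k > 0" "(\<Sum>k\<in>A. e k) = 1" "i \<in> A"
  shows "min (d i) (e i) \<le> MMF e d ord i"
  unfolding MMF_def using assms by (intro mmf_aux_ge_min_demand_entitlement) auto

lemma mono_on_if_strict_mono_on_then_constant:
  fixes u :: "real \<Rightarrow> real"
  assumes "strict_mono_on {0..\<rho>} u" "\<forall>x\<ge>\<rho>. u x = u \<rho>"
  shows "mono_on {0..} u"
proof (rule mono_onI)
  have below: "u x \<le> u y" if "0 \<le> x" "x \<le> y" "y \<le> \<rho>" for x y
  proof (cases "x = y")
    case False
    then show ?thesis
      using that by (intro less_imp_le strict_mono_onD[OF assms(1)]) auto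
  qed simp
  fix x y :: real
  assume "x \<in> {0..}" "y \<in> {0..}" "x \<le> y"
  then show "u x \<le> u y"
  proof (cases "y \<le> \<rho>")
    case False
    then have "u y = u \<rho>"
      by (intro assms(2)[rule_format]) simp
    moreover have "u x \<le> u \<rho>"
      using below[of x \<rho>] assms(2)[rule_format, of x] \<open>x \<in> {0..}\<close> by (cases "x \<le> \<rho>") auto
    ultimately show ?thesis
      by simp
  qed (use below in auto)
qed

lemma le_saturated_value:
  fixes u :: "real \<Rightarrow> real"
  assumes "mono_on {0..} u" "\<forall>x\<ge>\<rho>. u x = u \<rho>" "\<rho> \<le> \<rho>bar" "0 \<le> x"
  shows "u x \<le> u \<rho>bar"
proof -
  have "u x \<le> u (max x \<rho>)"
    using assms(4) by (intro mono_onD[OF assms(1)]) auto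
  also have "\<dots> = u \<rho>"
    by (intro assms(2)[rule_format]) simp
  also have "\<dots> = u \<rho>bar"
    using assms(2)[rule_format, OF assms(3)] by simp
  finally show ?thesis .
qed

lemma lipschitz_on_diff_le:
  fixes u :: "real \<Rightarrow> real"
  assumes "L-lipschitz_on S u" "x \<in> S" "y \<in> S" "y \<le> x"
  shows "u x - u y \<le> L * (x - y)"
proof -
  have "dist (u x) (u y) \<le> L * dist x y"
    using assms(1-3) by (rule lipschitz_onD)
  then show ?thesis
    using assms(4) by (simp add: dist_real_def)
qed

theorem lemma3:
  fixes n :: nat and i :: nat and e d :: "nat \<Rightarrow> real" and ord :: "nat list"
    and u :: "real \<Rightarrow> real" and \<rho> L v \<rho>hat \<rho>bar :: real
  assumes "i < n"
    and "\<forall>k<n. e k > 0" and "(\<Sum>k<n. e k) = 1"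
    and "\<forall>k<n. d k \<ge> 0"
    and "mmf_order n e d ord"
    and "v > 0" and "\<rho>hat \<ge> 0" and "d i = \<rho>hat * v"
    and "\<rho> \<ge> 0"
    and "strict_mono_on {0..\<rho>} u"
    and "\<forall>x\<ge>\<rho>. u x = u \<rho>"
    and "L-lipschitz_on {0..} u"
    and "\<rho>bar \<ge> max \<rho> \<rho>hat"
  shows "u (e i / v) - u (MMF e d ord i / v) \<le> L * (\<rho>bar - \<rho>hat)"
proof -
  define a where "a = MMF e d ord i"
  have a_ge: "min (d i) (e i) \<le> a"
    unfolding a_def using assms(1-3,5)
    by (intro MMF_ge_min_demand_entitlement[where A = "{..<n}"]) (auto simp: mmf_order_def)
  have mono: "mono_on {0..} u"
    using assms(10,11) by (rule mono_on_if_strict_mono_on_then_constant)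
  have "0 < e i" "0 \<le> L"
    using assms(1,2,12) by (auto simp: lipschitz_on_def)
  show ?thesis
  proof (cases "e i \<le> a")
    case True
    then have "u (e i / v) \<le> u (a / v)"
      using \<open>0 < e i\<close> assms(6) by (intro mono_onD[OF mono]) (auto simp: divide_right_mono)
    then show ?thesis
      using mult_nonneg_nonneg[OF \<open>0 \<le> L\<close>, of "\<rho>bar - \<rho>hat"] assms(13)
      unfolding a_def by simp
  next
    case False
    then have "\<rho>hat \<le> a / v"
      using a_ge assms(6,8) by (simp add: field_simps)
    then have "u \<rho>hat \<le> u (a / v)"
      using assms(7) by (intro mono_onD[OF mono]) auto
    moreover have "u (e i / v) \<le> u \<rho>bar"
      using assms(6,13) \<open>0 < e i\<close> by (intro le_saturated_value[OF mono assms(11)]) auto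
    moreover have "u \<rho>bar - u \<rho>hat \<le> L * (\<rho>bar - \<rho>hat)"
      using assms(7,12,13) by (intro lipschitz_on_diff_le) auto
    ultimately show ?thesis
      unfolding a_def by linarith
  qed
qed

end
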